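(* There is an absolute constant $C>0$ such that the following holds. Let $G=(V,E)$ be an unweighted graph with maximum vertex degree $d_{\max}$, and let $s,t\in V$ be distinct. Then there is a subset $S\subset V$ with $s\in S$, $t\in V\setminus S$, and $$ \frac{B_{st}^{2}}{R_{st}}\leq C\,d_{\max}\,\Theta(S)^{-2}. $$
   Context: For an unweighted graph with $n$ vertices, $L=D-A$ is the graph Laplacian, $L^{+}$ its Moore–Penrose pseudoinverse, $L^{2+}=(L^+)^2$, and $1_v$ the indicator vector of vertex $v$. The effective resistance is $R_{st}=(1_s-1_t)^{T}L^{+}(1_s-1_t)$ and the biharmonic distance is $B_{st}=\sqrt{(1_s-1_t)^{T}L^{2+}(1_s-1_t)}$. For a nonempty proper subset $S\subset V$, $E(S,V\setminus S)$ is the set of edges with one endpoint in $S$ and one in $V\setminus S$, and $\Theta(S)=\frac{n|E(S,V\setminus S)|}{|S||V\setminus S|}$ (the paper states the conclusion as $B_{st}^2/R_{st}\in O(d_{\max}\Theta(S)^{-2})$). *)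

theory Defs
  imports Complex_Main
begin

text \<open>Matrices indexed by V are functions nat \<Rightarrow> nat \<Rightarrow> real
  vanishing outside V \<times> V.\<close>

type_synonym mat = "nat \<Rightarrow> nat \<Rightarrow> real"

definition mmult :: "nat set \<Rightarrow> mat \<Rightarrow> mat \<Rightarrow> mat" where
  "mmult V A B = (\<lambda>i j. \<Sum>k\<in>V. A i k * B k j)"

definition mtrans :: "mat \<Rightarrow> mat" where
  "mtrans A = (\<lambda>i j. A j i)"

definition supported :: "nat set \<Rightarrow> mat \<Rightarrow> bool" where
  "supported V A \<longleftrightarrow> (\<forall>i j. i \<notin> V \<or> j \<notin> V \<longrightarrow> A i j = 0)"

definition pinv :: "nat set \<Rightarrow> mat \<Rightarrow> mat" where
  "pinv V A = (THE X. supported V X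
      \<and> mmult V (mmult V A X) A = A
      \<and> mmult V (mmult V X A) X = X
      \<and> mtrans (mmult V A X) = mmult V A X
      \<and> mtrans (mmult V X A) = mmult V X A)"

definition simple_graph :: "nat set \<Rightarrow> (nat \<Rightarrow> nat \<Rightarrow> bool) \<Rightarrow> bool" where
  "simple_graph V E \<longleftrightarrow> finite V \<and> (\<forall>u v. E u v \<longrightarrow> u \<in> V \<and> v \<in> V)
      \<and> (\<forall>u v. E u v \<longrightarrow> E v u) \<and> (\<forall>v. \<not> E v v)"

definition degree :: "nat set \<Rightarrow> (nat \<Rightarrow> nat \<Rightarrow> bool) \<Rightarrow> nat \<Rightarrow> nat" where
  "degree V E v = card {u \<in> V. E v u}"

definition dmax :: "nat set \<Rightarrow> (nat \<Rightarrow> nat \<Rightarrow> bool) \<Rightarrow> real" where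
  "dmax V E = real (Max (degree V E ` V))"

definition laplacian :: "nat set \<Rightarrow> (nat \<Rightarrow> nat \<Rightarrow> bool) \<Rightarrow> mat" where
  "laplacian V E = (\<lambda>i j. if i \<in> V \<and> j \<in> V then
      (if i = j then real (degree V E i) else if E i j then -1 else 0) else 0)"

definition quad :: "nat set \<Rightarrow> mat \<Rightarrow> (nat \<Rightarrow> real) \<Rightarrow> real" where
  "quad V M x = (\<Sum>i\<in>V. \<Sum>j\<in>V. x i * M i j * x j)"

definition ind_diff :: "nat \<Rightarrow> nat \<Rightarrow> nat \<Rightarrow> real" where
  "ind_diff s t = (\<lambda>v. (if v = s then 1 else 0) - (if v = t then 1 else 0))"

definition eff_res :: "nat set \<Rightarrow> (nat \<Rightarrow> nat \<Rightarrow> bool) \<Rightarrow> nat \<Rightarrow> nat \<Rightarrow> real" where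
  "eff_res V E s t = quad V (pinv V (laplacian V E)) (ind_diff s t)"

definition biharm :: "nat set \<Rightarrow> (nat \<Rightarrow> nat \<Rightarrow> bool) \<Rightarrow> nat \<Rightarrow> nat \<Rightarrow> real" where
  "biharm V E s t = sqrt (quad V (let P = pinv V (laplacian V E) in mmult V P P) (ind_diff s t))"

definition cut_size :: "nat set \<Rightarrow> (nat \<Rightarrow> nat \<Rightarrow> bool) \<Rightarrow> nat set \<Rightarrow> nat" where
  "cut_size V E S = card {(u, v). u \<in> S \<and> v \<in> V - S \<and> E u v}"

definition Theta :: "nat set \<Rightarrow> (nat \<Rightarrow> nat \<Rightarrow> bool) \<Rightarrow> nat set \<Rightarrow> real" where
  "Theta V E S = real (card V) * real (cut_size V E S) / (real (card S) * real (card (V - S)))"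

end

(* Let phi = L^+ (1_s - 1_t) be the potential of a unit s-t flow; then R_st = phi s - phi t and
   B_st^2 = |phi|^2.  If t is not reachable from s, the component of s is a cut with Theta = 0.
   Otherwise L phi = 1_s - 1_t and phi is orthogonal to the kernel of L, so clamping phi to
   [phi t, phi s] and centring it gives a vector a with |phi| <= |a| and Dirichlet energy at most
   that of phi, i.e. 2 R_st.  Sweeping a threshold through the values of g = a |a| and averaging
   over it (a discrete co-area formula) yields an s-t cut S with Theta(S) |a|^2 at most twice the
   variation of g along the edges; Cauchy-Schwarz and the degree bound turn this into
   Theta(S)^2 |a|^2 <= 32 d_max R_st.
   The pseudoinverse of the symmetric matrix L exists because the powers of L are linearly
   dependent, which gives L = L^2 p(L) for a polynomial p; then L p(L)^2 solves the Penrose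
   equations. *)

theory Submission
  imports Defs "HOL-Library.Function_Algebras" "HOL-Analysis.Henstock_Kurzweil_Integration"
begin

section \<open>Matrices indexed by a finite set\<close>

definition mscale :: "real \<Rightarrow> mat \<Rightarrow> mat" where
  "mscale r A = (\<lambda>i j. r * A i j)"

interpretation mat: vector_space mscale
  by unfold_locales (auto simp: mscale_def fun_eq_iff algebra_simps)

definition mident :: "nat set \<Rightarrow> mat" where
  "mident V = (\<lambda>i j. if i \<in> V \<and> i = j then 1 else 0)"

fun mpow :: "nat set \<Rightarrow> mat \<Rightarrow> nat \<Rightarrow> mat" where
  "mpow V A 0 = mident V"
| "mpow V A (Suc k) = mmult V A (mpow V A k)"

definition mvmult :: "nat set \<Rightarrow> mat \<Rightarrow> (nat \<Rightarrow> real) \<Rightarrow> nat \<Rightarrow> real" where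
  "mvmult V M y = (\<lambda>i. \<Sum>j\<in>V. M i j * y j)"

lemma sum_mat_apply: "(\<Sum>k\<in>K. (f k :: mat)) i j = (\<Sum>k\<in>K. f k i j)"
  by (induction K rule: infinite_finite_induct) auto

lemma mmult_assoc: "mmult V (mmult V A B) C = mmult V A (mmult V B C)"
  unfolding mmult_def
  by (auto simp: fun_eq_iff sum_distrib_left sum_distrib_right mult.assoc intro: sum.swap)

lemma mtrans_mmult: "mtrans (mmult V A B) = mmult V (mtrans B) (mtrans A)"
  unfolding mmult_def mtrans_def by (auto simp: fun_eq_iff mult.commute)

lemma mtrans_mtrans [simp]: "mtrans (mtrans A) = A"
  unfolding mtrans_def by simp

lemma mtrans_mident: "mtrans (mident V) = mident V"
  unfolding mtrans_def mident_def by (auto simp: fun_eq_iff)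

lemma mtrans_sum: "mtrans (\<Sum>k\<in>K. f k) = (\<Sum>k\<in>K. mtrans (f k))"
  unfolding mtrans_def by (auto simp: fun_eq_iff sum_mat_apply)

lemma mtrans_mscale: "mtrans (mscale r A) = mscale r (mtrans A)"
  unfolding mtrans_def mscale_def by auto

lemma mtrans_eq_iff: "mtrans A = A \<longleftrightarrow> (\<forall>i j. A i j = A j i)"
  unfolding mtrans_def by (auto simp: fun_eq_iff)

lemma supported_mtrans: "supported V A \<Longrightarrow> supported V (mtrans A)"
  unfolding supported_def mtrans_def by auto

lemma mmult_mident_left:
  assumes "finite V" "supported V A"
  shows "mmult V (mident V) A = A"
proof (intro ext)
  fix i j
  show "mmult V (mident V) A i j = A i j"
  proof (cases "i \<in> V")
    case True
    then have "mmult V (mident V) A i j = (\<Sum>k\<in>V. if k = i then A i j else 0)"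
      unfolding mmult_def mident_def by (intro sum.cong) auto
    then show ?thesis using True assms(1) by simp
  qed (use assms(2) in \<open>simp add: mmult_def mident_def supported_def\<close>)
qed

lemma mmult_mident_right: "finite V \<Longrightarrow> supported V A \<Longrightarrow> mmult V A (mident V) = A"
  by (metis mmult_mident_left mtrans_mident mtrans_mmult mtrans_mtrans supported_mtrans)

lemma mmult_sum_right: "mmult V A (\<Sum>k\<in>K. f k) = (\<Sum>k\<in>K. mmult V A (f k))"
  unfolding mmult_def by (auto simp: fun_eq_iff sum_mat_apply sum_distrib_left intro: sum.swap)

lemma mmult_sum_left: "mmult V (\<Sum>k\<in>K. f k) A = (\<Sum>k\<in>K. mmult V (f k) A)"
  unfolding mmult_def by (auto simp: fun_eq_iff sum_mat_apply sum_distrib_right intro: sum.swap)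

lemma mmult_mscale_right: "mmult V A (mscale r B) = mscale r (mmult V A B)"
  unfolding mmult_def mscale_def by (auto simp: fun_eq_iff sum_distrib_left algebra_simps)

lemma mmult_mscale_left: "mmult V (mscale r A) B = mscale r (mmult V A B)"
  unfolding mmult_def mscale_def by (auto simp: fun_eq_iff sum_distrib_left algebra_simps)

lemma mscale_0_left [simp]: "mscale 0 A = 0"
  unfolding mscale_def by (simp add: fun_eq_iff)

lemma mmult_add_right: "mmult V A (B + C) = mmult V A B + mmult V A C"
  unfolding mmult_def by (auto simp: fun_eq_iff sum.distrib algebra_simps)

lemma mmult_zero_right [simp]: "mmult V A 0 = 0"
  unfolding mmult_def by (auto simp: fun_eq_iff)

lemma supported_mmult: "supported V A \<Longrightarrow> supported V B \<Longrightarrow> supported V (mmult V A B)"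
  unfolding supported_def mmult_def by auto

lemma supported_mident: "supported V (mident V)"
  unfolding supported_def mident_def by auto

lemma supported_sum: "(\<And>k. k \<in> K \<Longrightarrow> supported V (f k)) \<Longrightarrow> supported V (\<Sum>k\<in>K. f k)"
  unfolding supported_def by (auto simp: sum_mat_apply)

lemma supported_mscale: "supported V A \<Longrightarrow> supported V (mscale r A)"
  unfolding supported_def mscale_def by auto

lemma supported_mpow: "supported V A \<Longrightarrow> supported V (mpow V A k)"
  by (induction k) (auto intro: supported_mmult supported_mident)

lemma mvmult_mmult: "mvmult V (mmult V A B) y = mvmult V A (mvmult V B y)"
  unfolding mvmult_def mmult_def
  by (auto simp: fun_eq_iff sum_distrib_left sum_distrib_right mult.assoc intro: sum.swap)

lemma mvmult_zero [simp]: "mvmult V A 0 = 0"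
  unfolding mvmult_def by (simp add: fun_eq_iff)

lemma mvmult_diff: "mvmult V A (\<lambda>i. y i - z i) = (\<lambda>i. mvmult V A y i - mvmult V A z i)"
  unfolding mvmult_def by (simp add: right_diff_distrib sum_subtractf)

lemma mvmult_outside: "supported V A \<Longrightarrow> i \<notin> V \<Longrightarrow> mvmult V A y i = 0"
  unfolding mvmult_def supported_def by simp

lemma sum_mvmult_symmetric:
  assumes "mtrans A = A"
  shows "(\<Sum>i\<in>V. y i * mvmult V A z i) = (\<Sum>i\<in>V. mvmult V A y i * z i)"
  using assms unfolding mvmult_def mtrans_eq_iff
  by (simp add: sum_distrib_left sum_distrib_right mult_ac, subst sum.swap, simp add: mult_ac)

section \<open>Powers of a matrix and the Moore--Penrose inverse\<close>

definition mpoly :: "nat set \<Rightarrow> mat \<Rightarrow> (nat \<Rightarrow> real) \<Rightarrow> nat \<Rightarrow> mat" where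
  "mpoly V A c N = (\<Sum>i\<le>N. mscale (c i) (mpow V A i))"

definition munit :: "nat \<times> nat \<Rightarrow> mat" where
  "munit = (\<lambda>(k, l) i j. if i = k \<and> j = l then 1 else 0)"

lemma mpow_commute:
  "finite V \<Longrightarrow> supported V A \<Longrightarrow> mmult V A (mpow V A k) = mmult V (mpow V A k) A"
  by (induction k) (simp_all add: mmult_mident_left mmult_mident_right, metis mmult_assoc)

lemma mtrans_mpow:
  "finite V \<Longrightarrow> supported V A \<Longrightarrow> mtrans A = A \<Longrightarrow> mtrans (mpow V A k) = mpow V A k"
  by (induction k) (simp_all add: mtrans_mident mtrans_mmult mpow_commute)

lemma mpoly_properties:
  assumes "finite V" "supported V A" "mtrans A = A"
  shows "supported V (mpoly V A c N)" "mtrans (mpoly V A c N) = mpoly V A c N"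
    "mmult V A (mpoly V A c N) = mmult V (mpoly V A c N) A"
  unfolding mpoly_def using assms
  by (simp_all add: supported_sum supported_mscale supported_mpow mtrans_sum mtrans_mscale
      mtrans_mpow mmult_sum_left mmult_sum_right mmult_mscale_left mmult_mscale_right mpow_commute)

lemma mpoly_Suc:
  "mpoly V A c (Suc N) = mscale (c 0) (mident V) + mmult V A (mpoly V A (\<lambda>i. c (Suc i)) N)"
  unfolding mpoly_def sum.atMost_Suc_shift by (simp add: mmult_sum_right mmult_mscale_right)

lemma mscale_mpoly: "mscale r (mpoly V A c N) = mpoly V A (\<lambda>i. r * c i) N"
  unfolding mpoly_def mscale_def by (simp add: fun_eq_iff sum_mat_apply sum_distrib_left mult.assoc)

lemma supported_in_span_munit:
  assumes "finite V" "supported V M"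
  shows "M \<in> mat.span (munit ` (V \<times> V))"
proof -
  have "M = (\<Sum>p\<in>V \<times> V. mscale (M (fst p) (snd p)) (munit p))"
  proof (intro ext)
    fix i j
    have "(\<Sum>p\<in>V \<times> V. mscale (M (fst p) (snd p)) (munit p)) i j
        = (\<Sum>p\<in>V \<times> V. if p = (i, j) then M i j else 0)"
      unfolding sum_mat_apply mscale_def munit_def by (intro sum.cong) (auto split: if_splits)
    also have "\<dots> = M i j"
      using assms unfolding supported_def by auto
    finally show "M i j = (\<Sum>p\<in>V \<times> V. mscale (M (fst p) (snd p)) (munit p)) i j" ..
  qed
  also have "\<dots> \<in> mat.span (munit ` (V \<times> V))"
    by (intro mat.span_sum mat.span_scale mat.span_base imageI)
  finally show ?thesis .
qed

lemma dependent_if_card_gt: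
  assumes "finite V" "\<forall>M\<in>S. supported V M" "card V * card V < card S"
  shows "mat.dependent S"
proof (rule ccontr)
  assume "\<not> mat.dependent S"
  moreover have "S \<subseteq> mat.span (munit ` (V \<times> V))"
    using assms(1,2) supported_in_span_munit by blast
  ultimately have "card S \<le> card (munit ` (V \<times> V))"
    using mat.independent_span_bound[of "munit ` (V \<times> V)" S] assms(1) by simp
  also have "\<dots> \<le> card V * card V"
    using card_image_le[of "V \<times> V" munit] assms(1) by (simp add: card_cartesian_product)
  finally show False
    using assms(3) by simp
qed

lemma mpow_dependent:
  assumes "finite V" "supported V A"
  shows "\<exists>c N. mpoly V A c N = 0 \<and> (\<exists>i\<le>N. c i \<noteq> 0)"
proof (cases "inj_on (mpow V A) {..card V * card V}")
  case True
  define N where "N = card V * card V"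
  have "card (mpow V A ` {..N}) = Suc N"
    using True unfolding N_def by (simp add: card_image)
  moreover have "\<forall>M\<in>mpow V A ` {..N}. supported V M"
    using supported_mpow[OF assms(2)] by blast
  ultimately have "mat.dependent (mpow V A ` {..N})"
    using dependent_if_card_gt[OF assms(1)] unfolding N_def by simp
  then obtain U u where U: "finite U" "U \<subseteq> mpow V A ` {..N}" "(\<Sum>v\<in>U. mscale (u v) v) = 0"
    "\<exists>v\<in>U. u v \<noteq> 0"
    unfolding mat.dependent_explicit by blast
  define c where "c i = (if mpow V A i \<in> U then u (mpow V A i) else 0)" for i
  define I where "I = {i\<in>{..N}. mpow V A i \<in> U}"
  have "mpoly V A c N = (\<Sum>i\<in>I. mscale (u (mpow V A i)) (mpow V A i))"
    unfolding mpoly_def I_def c_def by (rule sum.mono_neutral_cong_right) auto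
  also have "\<dots> = (\<Sum>v\<in>mpow V A ` I. mscale (u v) v)"
    using True unfolding N_def[symmetric] I_def by (subst sum.reindex) (auto intro: inj_on_subset)
  also have "mpow V A ` I = U"
    using U(2) unfolding I_def by auto
  finally have "mpoly V A c N = 0"
    using U(3) by (rule trans)
  moreover have "\<exists>i\<le>N. c i \<noteq> 0"
    using U(2,4) unfolding c_def by auto
  ultimately show ?thesis by blast
next
  case False
  then obtain i j where ij: "i \<le> card V * card V" "j \<le> card V * card V" "i \<noteq> j"
    "mpow V A i = mpow V A j"
    unfolding inj_on_def by auto
  define c where "c k = (if k = i then 1 else 0) - (if k = j then 1 else (0::real))" for k
  have "mpoly V A c (card V * card V) = 0"
  proof (intro ext)
    fix x y
    have "mpoly V A c (card V * card V) x y = (\<Sum>k\<le>card V * card V.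
        (if k = i then mpow V A k x y else 0) - (if k = j then mpow V A k x y else 0))"
      unfolding mpoly_def sum_mat_apply mscale_def c_def by (intro sum.cong) auto
    then show "mpoly V A c (card V * card V) x y = 0 x y"
      using ij by (simp add: sum_subtractf)
  qed
  moreover have "c i \<noteq> 0"
    using ij unfolding c_def by simp
  ultimately show ?thesis
    using ij by blast
qed

lemma mmult_self_eq_0:
  assumes "finite V" "supported V A" "mtrans A = A" "mmult V A (mmult V A M) = 0"
  shows "mmult V A M = 0"
proof -
  define N where "N = mmult V A M"
  have "N l j = 0" if "l \<in> V" for l j
  proof -
    have "(\<Sum>l\<in>V. N l j * N l j) = (\<Sum>l\<in>V. (\<Sum>k\<in>V. A l k * M k j) * N l j)"
      unfolding N_def mmult_def by simp
    also have "\<dots> = (\<Sum>k\<in>V. M k j * (\<Sum>l\<in>V. A k l * N l j))"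
      using assms(3) unfolding sum_distrib_right sum_distrib_left mtrans_eq_iff
      by (subst sum.swap) (simp add: algebra_simps)
    also have "\<dots> = 0"
      using assms(4) unfolding N_def[symmetric] by (simp add: mmult_def fun_eq_iff)
    finally show ?thesis
      using assms(1) that by (simp add: sum_nonneg_eq_0_iff)
  qed
  moreover have "N l j = 0" if "l \<notin> V" for l j
    using assms(2) that unfolding N_def mmult_def supported_def by auto
  ultimately show ?thesis
    unfolding N_def[symmetric] by (auto simp: fun_eq_iff)
qed

lemma mmult_square_factor:
  assumes "finite V" "supported V A" "mmult V A (mscale c (mident V) + mmult V A R) = 0" "c \<noteq> 0"
  shows "mmult V A (mmult V A (mscale (- 1 / c) R)) = A"
proof -
  have "mscale c A + mmult V A (mmult V A R) = 0"
    using assms(1-3) by (simp add: mmult_add_right mmult_mscale_right mmult_mident_right)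
  then have "mmult V A (mmult V A R) = mscale (- c) A"
    by (simp add: fun_eq_iff mscale_def eq_neg_iff_add_eq_0 add.commute)
  then show ?thesis
    using assms(4) by (simp only: mmult_mscale_right) (simp add: mscale_def)
qed

lemma ex_mpoly_factor:
  assumes fin: "finite V" and sA: "supported V A" and sym: "mtrans A = A"
    and "mmult V A (mpoly V A c N) = 0" "\<exists>i\<le>N. c i \<noteq> 0"
  shows "\<exists>d M. mmult V A (mmult V A (mpoly V A d M)) = A"
  using assms(4,5)
proof (induction N arbitrary: c)
  \<comment> \<open>vanishing low-order coefficients are stripped: for symmetric \<open>A\<close>, \<open>A (A R) = 0\<close> forces \<open>A R = 0\<close>\<close>
  case 0
  then have "mscale (c 0) A = 0"
    using fin sA by (simp add: mpoly_def mmult_mscale_right mmult_mident_right fun_eq_iff)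
  with 0 have "A = 0"
    by (simp add: mscale_def fun_eq_iff)
  then show ?case
    by (simp add: mmult_def fun_eq_iff)
next
  case (Suc N)
  show ?case
  proof (cases "c 0 = 0")
    case False
    from mmult_square_factor[OF fin sA Suc.prems(1)[unfolded mpoly_Suc] False] show ?thesis
      by (metis mscale_mpoly)
  next
    case True
    then have "mpoly V A c (Suc N) = mmult V A (mpoly V A (\<lambda>i. c (Suc i)) N)"
      by (simp add: mpoly_Suc)
    with Suc.prems(1) have "mmult V A (mpoly V A (\<lambda>i. c (Suc i)) N) = 0"
      using mmult_self_eq_0[OF fin sA sym] by metis
    moreover obtain i where "i \<le> Suc N" "c i \<noteq> 0"
      using Suc.prems(2) by blast
    then have "\<exists>i\<le>N. c (Suc i) \<noteq> 0"
      using True by (cases i) auto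
    ultimately show ?thesis
      by (rule Suc.IH)
  qed
qed

lemma penrose_unique:
  assumes sym: "mtrans A = A"
    and X1: "mmult V (mmult V A X) A = A" and X2: "mmult V (mmult V X A) X = X"
    and X3: "mtrans (mmult V A X) = mmult V A X" and X4: "mtrans (mmult V X A) = mmult V X A"
    and Y1: "mmult V (mmult V A Y) A = A" and Y2: "mmult V (mmult V Y A) Y = Y"
    and Y3: "mtrans (mmult V A Y) = mmult V A Y" and Y4: "mtrans (mmult V Y A) = mmult V Y A"
  shows "X = Y"
proof -
  have AX_AY: "mmult V (mtrans X) A = mmult V (mmult V A X) (mmult V A Y)"
  proof -
    have "mmult V (mtrans X) A = mtrans (mmult V (mmult V (mmult V A Y) A) X)"
      using Y1 by (simp add: mtrans_mmult sym)
    also have "\<dots> = mtrans (mmult V (mmult V A Y) (mmult V A X))"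
      by (simp add: mmult_assoc)
    also have "\<dots> = mmult V (mmult V A X) (mmult V A Y)"
      by (simp only: mtrans_mmult[of V "mmult V A Y" "mmult V A X"] X3 Y3)
    finally show ?thesis .
  qed
  have XA_YA: "mmult V A (mtrans Y) = mmult V (mmult V X A) (mmult V Y A)"
  proof -
    have "mmult V A (mtrans Y) = mtrans (mmult V Y (mmult V (mmult V A X) A))"
      using X1 by (simp add: mtrans_mmult sym)
    also have "\<dots> = mtrans (mmult V (mmult V Y A) (mmult V X A))"
      by (simp add: mmult_assoc)
    also have "\<dots> = mmult V (mmult V X A) (mmult V Y A)"
      by (simp only: mtrans_mmult[of V "mmult V Y A" "mmult V X A"] X4 Y4)
    finally show ?thesis .
  qed
  have "X = mmult V X (mmult V (mtrans X) A)"
    using X2 X3 by (simp add: mmult_assoc mtrans_mmult sym)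
  also have "\<dots> = mmult V X (mmult V A Y)"
    using X2 by (simp add: AX_AY flip: mmult_assoc)
  also have "\<dots> = mmult V (mmult V X A) (mmult V (mmult V Y A) Y)"
    using Y2 by (simp add: mmult_assoc)
  also have "\<dots> = mmult V (mmult V A (mtrans Y)) Y"
    by (simp add: XA_YA mmult_assoc)
  also have "\<dots> = Y"
    using Y2 Y4 by (simp add: mtrans_mmult sym)
  finally show ?thesis .
qed

lemma pinv_eqI:
  assumes "mtrans A = A" "supported V X"
    "mmult V (mmult V A X) A = A" "mmult V (mmult V X A) X = X"
    "mtrans (mmult V A X) = mmult V A X" "mtrans (mmult V X A) = mmult V X A"
  shows "pinv V A = X"
  unfolding pinv_def
proof (rule the_equality)
  fix Y
  assume "supported V Y \<and> mmult V (mmult V A Y) A = A \<and> mmult V (mmult V Y A) Y = Y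
    \<and> mtrans (mmult V A Y) = mmult V A Y \<and> mtrans (mmult V Y A) = mmult V Y A"
  then show "Y = X"
    using penrose_unique[OF assms(1) _ _ _ _ assms(3-6)] by blast
qed (use assms in blast)

lemma pinv_symmetric:
  assumes fin: "finite V" and sA: "supported V A" and sym: "mtrans A = A"
  defines "P \<equiv> pinv V A"
  shows "supported V P" "mtrans P = P" "mmult V A P = mmult V P A"
    "mmult V (mmult V P A) P = P" "mmult V (mmult V A P) A = A"
proof -
  obtain c N where "mpoly V A c N = 0" "\<exists>i\<le>N. c i \<noteq> 0"
    using mpow_dependent[OF fin sA] by blast
  then obtain d M where AAQ: "mmult V A (mmult V A (mpoly V A d M)) = A"
    using ex_mpoly_factor[OF fin sA sym] by (metis mmult_zero_right)
  define Q where "Q = mpoly V A d M"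
  note Q = mpoly_properties[OF fin sA sym, of d M, folded Q_def]
  \<comment> \<open>\<open>A = A\<^sup>2 Q\<close> with \<open>Q\<close> a polynomial in \<open>A\<close>, so \<open>Q\<close> is symmetric and commutes with \<open>A\<close>\<close>
  define P' where "P' = mmult V A (mmult V Q Q)"
  have AP': "mmult V A P' = mmult V A Q"
    unfolding P'_def using AAQ[folded Q_def] by (metis mmult_assoc)
  have P'A: "mmult V P' A = mmult V A Q"
    unfolding P'_def using AAQ[folded Q_def] Q(3) by (metis mmult_assoc)
  have AQ_sym: "mtrans (mmult V A Q) = mmult V A Q"
    using Q(2,3) sym by (simp add: mtrans_mmult)
  have P'1: "mmult V (mmult V A P') A = A"
    using AP' AAQ[folded Q_def] Q(3) by (metis mmult_assoc)
  have AQA: "mmult V (mmult V A Q) A = A"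
    using AAQ[folded Q_def] Q(3) by (metis mmult_assoc)
  have P'2: "mmult V (mmult V P' A) P' = P'"
    unfolding P'A by (simp add: P'_def AQA flip: mmult_assoc)
  have "supported V P'"
    unfolding P'_def by (intro supported_mmult sA Q(1))
  moreover have "mtrans P' = P'"
    unfolding P'_def using Q(2,3) sym by (simp add: mtrans_mmult mmult_assoc) (metis mmult_assoc)
  moreover have "P = P'"
    unfolding P_def using \<open>supported V P'\<close> P'1 P'2 AP' P'A AQ_sym by (intro pinv_eqI[OF sym]) simp_all
  ultimately show "supported V P" "mtrans P = P" "mmult V A P = mmult V P A"
    "mmult V (mmult V P A) P = P" "mmult V (mmult V A P) A = A"
    using AP' P'A P'1 P'2 by simp_all
qed

section \<open>The Laplacian and the potential of a unit flow\<close>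

definition dirichlet :: "nat set \<Rightarrow> (nat \<Rightarrow> nat \<Rightarrow> bool) \<Rightarrow> (nat \<Rightarrow> real) \<Rightarrow> (nat \<Rightarrow> real) \<Rightarrow> real"
  where "dirichlet V E y z = (\<Sum>i\<in>V. \<Sum>j\<in>V. if E i j then (y i - y j) * (z i - z j) else 0)"

definition potential :: "nat set \<Rightarrow> (nat \<Rightarrow> nat \<Rightarrow> bool) \<Rightarrow> nat \<Rightarrow> nat \<Rightarrow> nat \<Rightarrow> real"
  where "potential V E s t = mvmult V (pinv V (laplacian V E)) (ind_diff s t)"

lemma supported_laplacian: "supported V (laplacian V E)"
  unfolding supported_def laplacian_def by auto

lemma mtrans_laplacian: "simple_graph V E \<Longrightarrow> mtrans (laplacian V E) = laplacian V E"
  unfolding mtrans_def laplacian_def simple_graph_def by (auto simp: fun_eq_iff)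

lemma pinv_laplacian:
  assumes "simple_graph V E"
  defines "L \<equiv> laplacian V E" and "P \<equiv> pinv V (laplacian V E)"
  shows "supported V P" "mtrans P = P" "mmult V L P = mmult V P L"
    "mmult V (mmult V P L) P = P" "mmult V (mmult V L P) L = L"
  using pinv_symmetric[of V L] assms supported_laplacian mtrans_laplacian
  unfolding simple_graph_def by auto

lemma laplacian_apply:
  assumes "simple_graph V E" "i \<in> V"
  shows "mvmult V (laplacian V E) z i = (\<Sum>j\<in>V. if E i j then z i - z j else 0)"
proof -
  have fin: "finite V" and irrefl: "\<not> E i i"
    using assms(1) unfolding simple_graph_def by auto
  have "mvmult V (laplacian V E) z i
      = (\<Sum>j\<in>V. (if j = i then real (degree V E i) * z i else 0) - (if E i j then z j else 0))"
    unfolding mvmult_def using assms(2) irrefl by (intro sum.cong) (auto simp: laplacian_def)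
  also have "\<dots> = real (degree V E i) * z i - (\<Sum>j\<in>V. if E i j then z j else 0)"
    using assms(2) fin by (simp add: sum_subtractf)
  also have "real (degree V E i) = (\<Sum>j\<in>V. if E i j then 1 else 0)"
    unfolding degree_def using fin by (simp add: sum.inter_filter[symmetric])
  finally show ?thesis
    by (simp add: sum_distrib_right sum_subtractf[symmetric] if_distrib cong: if_cong)
qed

lemma laplacian_form:
  assumes "simple_graph V E"
  shows "(\<Sum>i\<in>V. y i * mvmult V (laplacian V E) z i) = dirichlet V E y z / 2"
proof -
  have sym: "E i j = E j i" for i j
    using assms unfolding simple_graph_def by blast
  define T where "T = (\<Sum>i\<in>V. \<Sum>j\<in>V. if E i j then y i * (z i - z j) else 0)"
  have "(\<Sum>i\<in>V. y i * mvmult V (laplacian V E) z i) = T"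
    unfolding T_def using assms
    by (intro sum.cong refl) (simp add: laplacian_apply sum_distrib_left if_distrib cong: if_cong)
  moreover have "T = (\<Sum>i\<in>V. \<Sum>j\<in>V. if E i j then y j * (z j - z i) else 0)"
    unfolding T_def by (subst sum.swap) (simp add: sym)
  moreover have "T + (\<Sum>i\<in>V. \<Sum>j\<in>V. if E i j then y j * (z j - z i) else 0) = dirichlet V E y z"
    unfolding T_def dirichlet_def sum.distrib[symmetric]
    by (intro sum.cong refl) (auto simp: algebra_simps)
  ultimately show ?thesis by simp
qed

lemma dirichlet_nonneg: "0 \<le> dirichlet V E y y"
  unfolding dirichlet_def by (intro sum_nonneg) auto

lemma dirichlet_diff:
  "dirichlet V E (\<lambda>i. a i - b i) (\<lambda>i. a i - b i)
    = dirichlet V E a a - 2 * dirichlet V E b a + dirichlet V E b b"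
  unfolding dirichlet_def sum_subtractf[symmetric] sum.distrib[symmetric] sum_distrib_left
  by (intro sum.cong refl) (auto simp: algebra_simps)

lemma dirichlet_clamp_le:
  "dirichlet V E (\<lambda>v. max lo (min hi (y v))) (\<lambda>v. max lo (min hi (y v))) \<le> dirichlet V E y y"
  unfolding dirichlet_def
proof (intro sum_mono)
  fix i j
  have "\<bar>max lo (min hi (y i)) - max lo (min hi (y j))\<bar> \<le> \<bar>y i - y j\<bar>"
    by (simp add: max_def min_def abs_if)
  then have "(max lo (min hi (y i)) - max lo (min hi (y j)))\<^sup>2 \<le> (y i - y j)\<^sup>2"
    by (simp add: abs_le_square_iff)
  then show "(if E i j then (max lo (min hi (y i)) - max lo (min hi (y j)))
        * (max lo (min hi (y i)) - max lo (min hi (y j))) else 0)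
      \<le> (if E i j then (y i - y j) * (y i - y j) else 0)"
    by (simp add: power2_eq_square)
qed

lemma edge_eq_if_dirichlet_le_0:
  assumes "simple_graph V E" "dirichlet V E w w \<le> 0" "E i j"
  shows "w i = w j"
proof -
  have fin: "finite V" and ij: "i \<in> V" "j \<in> V"
    using assms(1,3) unfolding simple_graph_def by auto
  have "dirichlet V E w w = 0"
    using assms(2) dirichlet_nonneg[of V E w] by linarith
  then have "(if E i j then (w i - w j) * (w i - w j) else 0) = 0"
    using fin ij unfolding dirichlet_def
    by (simp add: sum_nonneg_eq_0_iff sum_nonneg)
  then show ?thesis
    using assms(3) by simp
qed

lemma laplacian_eq_0_iff:
  assumes "simple_graph V E"
  shows "mvmult V (laplacian V E) w = 0 \<longleftrightarrow> (\<forall>i j. E i j \<longrightarrow> w i = w j)"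
proof
  assume "mvmult V (laplacian V E) w = 0"
  then have "dirichlet V E w w = 0"
    using laplacian_form[OF assms, of w w] by simp
  then show "\<forall>i j. E i j \<longrightarrow> w i = w j"
    using edge_eq_if_dirichlet_le_0[OF assms] by simp
next
  assume "\<forall>i j. E i j \<longrightarrow> w i = w j"
  then have "mvmult V (laplacian V E) w i = 0" for i
    using laplacian_apply[OF assms] mvmult_outside[OF supported_laplacian]
    by (cases "i \<in> V") (auto intro: sum.neutral)
  then show "mvmult V (laplacian V E) w = 0"
    by (simp add: fun_eq_iff)
qed

lemma sum_mult_ind_diff:
  assumes "finite V" "s \<in> V" "t \<in> V" "s \<noteq> t"
  shows "(\<Sum>i\<in>V. f i * ind_diff s t i) = f s - f t"
proof -
  have "(\<Sum>i\<in>V. f i * ind_diff s t i)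
      = (\<Sum>i\<in>V. (if i = s then f s else 0) - (if i = t then f t else 0))"
    unfolding ind_diff_def by (intro sum.cong refl) auto
  also have "\<dots> = f s - f t"
    using assms by (simp add: sum_subtractf)
  finally show ?thesis .
qed

lemma quad_eq_sum_mvmult: "quad V M x = (\<Sum>i\<in>V. x i * mvmult V M x i)"
  unfolding quad_def mvmult_def by (simp add: sum_distrib_left mult.assoc)

lemma eff_res_potential:
  assumes "finite V" "s \<in> V" "t \<in> V" "s \<noteq> t"
  shows "eff_res V E s t = potential V E s t s - potential V E s t t"
  using sum_mult_ind_diff[OF assms, of "potential V E s t"]
  unfolding eff_res_def quad_eq_sum_mvmult potential_def by (simp add: mult.commute)

lemma biharm_potential:
  assumes "simple_graph V E"
  shows "(biharm V E s t)\<^sup>2 = (\<Sum>i\<in>V. (potential V E s t i)\<^sup>2)"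
proof -
  define P where "P = pinv V (laplacian V E)"
  have "quad V (mmult V P P) (ind_diff s t)
      = (\<Sum>i\<in>V. ind_diff s t i * mvmult V P (mvmult V P (ind_diff s t)) i)"
    by (simp add: quad_eq_sum_mvmult mvmult_mmult)
  also have "\<dots> = (\<Sum>i\<in>V. mvmult V P (ind_diff s t) i * mvmult V P (ind_diff s t) i)"
    using pinv_laplacian(2)[OF assms, folded P_def] by (rule sum_mvmult_symmetric)
  also have "\<dots> = (\<Sum>i\<in>V. (potential V E s t i)\<^sup>2)"
    by (simp add: potential_def P_def power2_eq_square)
  finally have "quad V (mmult V P P) (ind_diff s t) = (\<Sum>i\<in>V. (potential V E s t i)\<^sup>2)" .
  moreover have "0 \<le> (\<Sum>i\<in>V. (potential V E s t i)\<^sup>2)"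
    by (intro sum_nonneg) auto
  ultimately show ?thesis
    unfolding biharm_def Let_def P_def[symmetric] by simp
qed

lemma potential_orthogonal:
  assumes "simple_graph V E" "mvmult V (laplacian V E) k = 0"
  shows "(\<Sum>i\<in>V. potential V E s t i * k i) = 0"
proof -
  define L where "L = laplacian V E"
  define P where "P = pinv V L"
  note P = pinv_laplacian[OF assms(1), folded L_def, folded P_def]
  have "P = mmult V (mmult V P P) L"
    using P(3,4) by (metis mmult_assoc)
  then have "mvmult V P k = 0"
    using assms(2) by (metis L_def mvmult_mmult mvmult_zero)
  then have "(\<Sum>i\<in>V. ind_diff s t i * mvmult V P k i) = 0"
    by simp
  then show ?thesis
    unfolding potential_def L_def[symmetric] P_def[symmetric] sum_mvmult_symmetric[OF P(2)] .
qed

lemma laplacian_potential: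
  assumes G: "simple_graph V E" and st: "s \<in> V" "t \<in> V" "s \<noteq> t" and conn: "E\<^sup>*\<^sup>* s t"
  shows "mvmult V (laplacian V E) (potential V E s t) = ind_diff s t"
proof -
  define L where "L = laplacian V E"
  define P where "P = pinv V L"
  define x where "x = ind_diff s t"
  note P = pinv_laplacian[OF G, folded L_def, folded P_def]
  have fin: "finite V"
    using G unfolding simple_graph_def by auto
  \<comment> \<open>\<open>w\<close> is harmonic, so \<open>w s = w t\<close>, which forces \<open>\<Sum>i\<in>V. w i * w i = 0\<close>\<close>
  define w where "w i = x i - mvmult V (mmult V L P) x i" for i
  have "mmult V L (mmult V L P) = L"
    using P(3,5) by (metis mmult_assoc)
  then have "mvmult V L w = 0"
    unfolding w_def mvmult_diff by (simp add: zero_fun_def flip: mvmult_mmult)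
  then have edge: "E i j \<Longrightarrow> w i = w j" for i j
    using laplacian_eq_0_iff[OF G] unfolding L_def by blast
  have "w s = w t"
    using conn by (induction rule: rtranclp_induct) (auto dest: edge)
  have LP_sym: "mtrans (mmult V L P) = mmult V L P"
    using P(2,3) mtrans_laplacian[OF G] by (simp add: mtrans_mmult L_def)
  have "(\<Sum>i\<in>V. w i * mvmult V (mmult V L P) x i) = (\<Sum>i\<in>V. mvmult V (mmult V P L) w i * x i)"
    using sum_mvmult_symmetric[OF LP_sym] P(3) by simp
  also have "\<dots> = 0"
    using \<open>mvmult V L w = 0\<close> by (simp add: mvmult_mmult)
  finally have "(\<Sum>i\<in>V. w i * w i) = (\<Sum>i\<in>V. w i * x i)"
    by (simp add: w_def right_diff_distrib sum_subtractf)
  also have "\<dots> = 0"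
    using sum_mult_ind_diff[OF fin st] \<open>w s = w t\<close> unfolding x_def by simp
  finally have "w i = 0" if "i \<in> V" for i
    using fin that by (simp add: sum_nonneg_eq_0_iff)
  moreover have "x i = 0" "mvmult V L (mvmult V P x) i = 0" if "i \<notin> V" for i
    using that st mvmult_outside[OF supported_laplacian] unfolding x_def ind_diff_def L_def by auto
  ultimately show ?thesis
    unfolding potential_def L_def[symmetric] P_def[symmetric] x_def[symmetric]
    by (metis w_def mvmult_mmult right_minus_eq ext)
qed

lemma dirichlet_potential:
  assumes "simple_graph V E" "s \<in> V" "t \<in> V" "s \<noteq> t"
    and "mvmult V (laplacian V E) \<phi> = ind_diff s t"
  shows "dirichlet V E y \<phi> = 2 * (y s - y t)"
  using laplacian_form[OF assms(1), of y \<phi>] sum_mult_ind_diff[of V s t y] assms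
  unfolding simple_graph_def by simp


lemma sum_sq_le_centered_clamp:
  assumes G: "simple_graph V E" and st: "s \<in> V" "t \<in> V" "s \<noteq> t"
    and flow: "mvmult V (laplacian V E) \<phi> = ind_diff s t"
    and orth: "\<And>k. mvmult V (laplacian V E) k = 0 \<Longrightarrow> (\<Sum>i\<in>V. \<phi> i * k i) = 0"
    and "\<phi> t \<le> \<phi> s"
  defines "\<psi> \<equiv> \<lambda>v. max (\<phi> t) (min (\<phi> s) (\<phi> v))"
  shows "(\<Sum>i\<in>V. (\<phi> i)\<^sup>2) \<le> (\<Sum>i\<in>V. (\<psi> i - (\<Sum>j\<in>V. \<psi> j) / card V)\<^sup>2)"
proof -
  define m where "m = (\<Sum>j\<in>V. \<psi> j) / card V"
  \<comment> \<open>\<open>\<phi> - \<psi>\<close> has nonpositive energy, so \<open>k\<close> is constant along edges, i.e. harmonic\<close>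
  define k where "k i = \<phi> i - \<psi> i + m" for i
  have "\<psi> s = \<phi> s" "\<psi> t = \<phi> t"
    using \<open>\<phi> t \<le> \<phi> s\<close> unfolding \<psi>_def by auto
  then have "dirichlet V E \<psi> \<phi> = dirichlet V E \<phi> \<phi>"
    using dirichlet_potential[OF G st flow] by metis
  moreover have "dirichlet V E \<psi> \<psi> \<le> dirichlet V E \<phi> \<phi>"
    unfolding \<psi>_def by (rule dirichlet_clamp_le)
  ultimately have "dirichlet V E (\<lambda>i. \<phi> i - \<psi> i) (\<lambda>i. \<phi> i - \<psi> i) \<le> 0"
    unfolding dirichlet_diff by simp
  then have "E i j \<Longrightarrow> k i = k j" for i j
    unfolding k_def using edge_eq_if_dirichlet_le_0[OF G] by fastforce
  then have "(\<Sum>i\<in>V. \<phi> i * k i) = 0"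
    using orth laplacian_eq_0_iff[OF G] by blast
  then have "(\<Sum>i\<in>V. (\<phi> i - k i)\<^sup>2) = (\<Sum>i\<in>V. (\<phi> i)\<^sup>2) + (\<Sum>i\<in>V. (k i)\<^sup>2)"
    by (simp add: power2_diff sum.distrib sum_subtractf mult.assoc flip: sum_distrib_left)
  moreover have "0 \<le> (\<Sum>i\<in>V. (k i)\<^sup>2)"
    by (intro sum_nonneg) auto
  moreover have "\<phi> i - k i = \<psi> i - m" for i
    unfolding k_def by simp
  ultimately show ?thesis
    unfolding m_def by simp
qed

section \<open>Sweep cuts\<close>

lemma signed_square_diff_bounds:
  fixes x y :: real
  assumes "y \<le> x"
  shows "(x - y)\<^sup>2 \<le> 2 * (x * \<bar>x\<bar> - y * \<bar>y\<bar>)"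
    and "x * \<bar>x\<bar> - y * \<bar>y\<bar> \<le> (x - y) * (\<bar>x\<bar> + \<bar>y\<bar>)"
proof -
  consider "0 \<le> y" | "x \<le> 0" | "y < 0" "0 < x"
    by linarith
  then have "(x - y)\<^sup>2 \<le> 2 * (x * \<bar>x\<bar> - y * \<bar>y\<bar>) \<and> x * \<bar>x\<bar> - y * \<bar>y\<bar> \<le> (x - y) * (\<bar>x\<bar> + \<bar>y\<bar>)"
  proof cases
    case 1
    then have "0 \<le> (x - y) * (x + 3 * y)"
      using assms by simp
    then show ?thesis
      using 1 assms by (simp add: power2_eq_square algebra_simps)
  next
    case 2
    then have "0 \<le> (y - x) * (y + 3 * x)"
      using assms by (intro mult_nonpos_nonpos) auto
    then show ?thesis
      using 2 assms by (simp add: power2_eq_square algebra_simps)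
  next
    case 3
    then have "0 \<le> (x + y)\<^sup>2" "x * y < 0"
      by (simp_all add: mult_pos_neg)
    then show ?thesis
      using 3 by (simp add: power2_eq_square algebra_simps)
  qed
  then show "(x - y)\<^sup>2 \<le> 2 * (x * \<bar>x\<bar> - y * \<bar>y\<bar>)"
    and "x * \<bar>x\<bar> - y * \<bar>y\<bar> \<le> (x - y) * (\<bar>x\<bar> + \<bar>y\<bar>)"
    by auto
qed

lemma signed_square_mono: "(x::real) \<le> y \<Longrightarrow> x * \<bar>x\<bar> \<le> y * \<bar>y\<bar>"
  using signed_square_diff_bounds(1)[of x y] by (smt (verit) zero_le_power2)

lemma abs_signed_square_diff_le:
  "\<bar>(x::real) * \<bar>x\<bar> - y * \<bar>y\<bar>\<bar> \<le> \<bar>x - y\<bar> * (\<bar>x\<bar> + \<bar>y\<bar>)"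
proof -
  have "\<bar>x * \<bar>x\<bar> - y * \<bar>y\<bar>\<bar> \<le> \<bar>x - y\<bar> * (\<bar>x\<bar> + \<bar>y\<bar>)" if "y \<le> x" for x y :: real
    using signed_square_diff_bounds(2)[OF that] signed_square_mono[OF that] that by simp
  from this[of y x] this[of x y] show ?thesis
    by (cases "y \<le> x") (simp_all add: abs_minus_commute add.commute)
qed

lemma square_diff_le_signed_square_diff:
  "((x::real) - y)\<^sup>2 \<le> 2 * \<bar>x * \<bar>x\<bar> - y * \<bar>y\<bar>\<bar>"
proof -
  have "(x - y)\<^sup>2 \<le> 2 * \<bar>x * \<bar>x\<bar> - y * \<bar>y\<bar>\<bar>" if "y \<le> x" for x y :: real
    using signed_square_diff_bounds(1)[OF that]
    by (rule order_trans) (rule mult_left_mono[OF abs_ge_self], simp)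
  from this[of x y] this[of y x] show ?thesis
    by (cases "y \<le> x") (simp_all add: power2_commute abs_minus_commute)
qed
lemma card_pairs_eq_sum:
  assumes "finite A" "finite B"
  shows "real (card {(u, v). u \<in> A \<and> v \<in> B \<and> P u v}) = (\<Sum>u\<in>A. \<Sum>v\<in>B. if P u v then 1 else 0)"
proof -
  have "{(u, v). u \<in> A \<and> v \<in> B \<and> P u v} = Sigma A (\<lambda>u. {v\<in>B. P u v})"
    by auto
  then have "card {(u, v). u \<in> A \<and> v \<in> B \<and> P u v} = (\<Sum>u\<in>A. card {v\<in>B. P u v})"
    using assms by (simp add: card_SigmaI)
  moreover have "real (card {v\<in>B. P u v}) = (\<Sum>v\<in>B. if P u v then 1 else 0)" for u
    using sum.inter_filter[OF assms(2), of "\<lambda>_. 1::real" "P u"] by simp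
  ultimately show ?thesis
    by simp
qed

lemma indicator_interval_has_integral:
  fixes a b lo hi :: real
  assumes "lo \<le> a" "b \<le> hi"
  shows "((\<lambda>\<theta>. if a \<le> \<theta> \<and> \<theta> < b then 1 else 0) has_integral max 0 (b - a)) {lo..hi}"
proof (cases "a < b")
  case True
  have "((\<lambda>\<theta>. if \<theta> \<in> cbox a b then 1 else 0) has_integral (b - a)) (cbox lo hi)"
    using assms True has_integral_const_real[of "1::real" a b]
    by (intro has_integral_restrict_closed_subinterval) (auto simp: cbox_interval)
  then have closed: "((\<lambda>\<theta>. if \<theta> \<in> {a..b} then 1 else 0) has_integral (b - a)) {lo..hi}"
    by (simp add: cbox_interval)
  have "((\<lambda>\<theta>. if a \<le> \<theta> \<and> \<theta> < b then 1 else 0) has_integral (b - a)) {lo..hi}"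
    by (rule has_integral_spike_finite[OF _ _ closed, where S="{b}"]) auto
  then show ?thesis
    using True by simp
next
  case False
  then have "(\<lambda>\<theta>::real. if a \<le> \<theta> \<and> \<theta> < b then 1 else 0) = (\<lambda>_. 0::real)"
    by auto
  then show ?thesis
    using False by simp
qed

lemma threshold_pairs_has_integral:
  fixes g :: "nat \<Rightarrow> real"
  assumes "finite V" "\<forall>v\<in>V. lo \<le> g v \<and> g v \<le> hi"
  shows "((\<lambda>\<theta>. real (card {(u, v). u \<in> V \<and> v \<in> V \<and> P u v \<and> g v \<le> \<theta> \<and> \<theta> < g u}))
    has_integral (\<Sum>u\<in>V. \<Sum>v\<in>V. if P u v then max 0 (g u - g v) else 0)) {lo..hi}"
proof -
  let ?P = "\<lambda>u v. if P u v then 1 else (0::real)"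
  have "((\<lambda>\<theta>. \<Sum>u\<in>V. \<Sum>v\<in>V. ?P u v * (if g v \<le> \<theta> \<and> \<theta> < g u then 1 else 0))
      has_integral (\<Sum>u\<in>V. \<Sum>v\<in>V. ?P u v * max 0 (g u - g v))) {lo..hi}"
    using assms by (intro has_integral_sum has_integral_mult_right indicator_interval_has_integral) auto
  moreover have "real (card {(u, v). u \<in> V \<and> v \<in> V \<and> P u v \<and> g v \<le> \<theta> \<and> \<theta> < g u})
      = (\<Sum>u\<in>V. \<Sum>v\<in>V. ?P u v * (if g v \<le> \<theta> \<and> \<theta> < g u then 1 else 0))" for \<theta>
    unfolding card_pairs_eq_sum[OF assms(1) assms(1)] by (intro sum.cong) auto
  moreover have "(\<Sum>u\<in>V. \<Sum>v\<in>V. ?P u v * max 0 (g u - g v))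
      = (\<Sum>u\<in>V. \<Sum>v\<in>V. if P u v then max 0 (g u - g v) else 0)"
    by (intro sum.cong) auto
  ultimately show ?thesis
    by simp
qed


lemma cut_size_level_set:
  fixes g :: "nat \<Rightarrow> real"
  assumes "simple_graph V E"
  shows "cut_size V E {v \<in> V. \<theta> < g v}
    = card {(u, v). u \<in> V \<and> v \<in> V \<and> E u v \<and> g v \<le> \<theta> \<and> \<theta> < g u}"
  using assms unfolding cut_size_def simple_graph_def by (intro arg_cong[where f=card]) (auto simp: not_less)

lemma card_level_set_pairs:
  fixes g :: "nat \<Rightarrow> real"
  shows "card {v \<in> V. \<theta> < g v} * card (V - {v \<in> V. \<theta> < g v})
    = card {(u, v). u \<in> V \<and> v \<in> V \<and> True \<and> g v \<le> \<theta> \<and> \<theta> < g u}"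
proof -
  have "{v \<in> V. \<theta> < g v} \<times> (V - {v \<in> V. \<theta> < g v})
      = {(u, v). u \<in> V \<and> v \<in> V \<and> True \<and> g v \<le> \<theta> \<and> \<theta> < g u}"
    by (auto simp: not_less)
  then show ?thesis
    by (metis card_cartesian_product)
qed

lemma card_mult_card_diff_pos:
  assumes "finite V" "S \<subseteq> V" "s \<in> S" "t \<in> V - S"
  shows "0 < card S * card (V - S)"
proof -
  have "0 < card S" "0 < card (V - S)"
    using assms finite_subset[of S V] by (auto simp: card_gt_0_iff)
  then show ?thesis
    by simp
qed

lemma Theta_mult_le:
  assumes "finite V" "S \<subseteq> V" "s \<in> S" "t \<in> V - S"
    and "real (cut_size V E S) * D \<le> N * real (card S * card (V - S))"
  shows "Theta V E S * D \<le> real (card V) * N"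
proof -
  have pos: "0 < real (card S * card (V - S))"
    using card_mult_card_diff_pos[OF assms(1-4)] by simp
  have "real (card V) * (real (cut_size V E S) * D) \<le> real (card V) * (N * real (card S * card (V - S)))"
    using assms(5) by (rule mult_left_mono) simp
  then have "real (card V) * (real (cut_size V E S) * D) / real (card S * card (V - S)) \<le> real (card V) * N"
    using pos by (simp add: divide_le_eq mult.assoc)
  then show ?thesis
    unfolding Theta_def by simp
qed

lemma ex_cut_Theta_le:
  fixes g :: "nat \<Rightarrow> real"
  assumes G: "simple_graph V E" and st: "s \<in> V" "t \<in> V" "s \<noteq> t"
    and range: "\<forall>v\<in>V. g t \<le> g v \<and> g v \<le> g s"
  shows "\<exists>S\<subseteq>V. s \<in> S \<and> t \<in> V - S \<and>
    Theta V E S * (\<Sum>u\<in>V. \<Sum>v\<in>V. max 0 (g u - g v))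
      \<le> real (card V) * (\<Sum>u\<in>V. \<Sum>v\<in>V. if E u v then max 0 (g u - g v) else 0)"
proof -
  have fin: "finite V"
    using G unfolding simple_graph_def by auto
  define Num where "Num = (\<Sum>u\<in>V. \<Sum>v\<in>V. if E u v then max 0 (g u - g v) else 0)"
  define Den where "Den = (\<Sum>u\<in>V. \<Sum>v\<in>V. max 0 (g u - g v))"
  define F where "F = {S. S \<subseteq> V \<and> s \<in> S \<and> t \<notin> S}"
  define pairs where "pairs S = real (card S * card (V - S))" for S
  define ratio where "ratio S = real (cut_size V E S) / pairs S" for S
  \<comment> \<open>a sparsest \<open>s\<close>-\<open>t\<close> cut; integrating over the threshold compares it with all level sets of \<open>g\<close>\<close>
  define S0 where "S0 = arg_min_on ratio F"
  define level where "level \<theta> = {v \<in> V. \<theta> < g v}" for \<theta>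
  have "finite F" "F \<noteq> {}"
    using fin st unfolding F_def by (auto intro: finite_subset[of _ "Pow V"] exI[of _ "{s}"])
  then have S0: "S0 \<in> F" and S0_min: "\<And>S. S \<in> F \<Longrightarrow> ratio S0 \<le> ratio S"
    using arg_min_if_finite[of F ratio] unfolding S0_def by (auto simp: not_less)
  have pointwise: "ratio S0 * pairs (level \<theta>) \<le> real (cut_size V E (level \<theta>))"
    if "\<theta> \<in> {g t..g s}" for \<theta>
  proof (cases "\<theta> < g s")
    case True
    then have "level \<theta> \<in> F"
      using that st unfolding F_def level_def by auto
    moreover have "0 < pairs (level \<theta>)"
      using card_mult_card_diff_pos[OF fin, of "level \<theta>" s t] True that st
      unfolding pairs_def level_def by auto
    ultimately show ?thesis
      using S0_min[of "level \<theta>"] unfolding ratio_def by (simp add: pos_le_divide_eq)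
  next
    case False
    then have "level \<theta> = {}"
      using range that unfolding level_def by force
    then show ?thesis
      unfolding pairs_def by simp
  qed
  have "((\<lambda>\<theta>. ratio S0 * pairs (level \<theta>)) has_integral ratio S0 * Den) {g t..g s}"
    unfolding pairs_def level_def card_level_set_pairs Den_def
    using has_integral_mult_right[OF threshold_pairs_has_integral[OF fin range, of "\<lambda>_ _. True"]]
    by simp
  moreover have "((\<lambda>\<theta>. real (cut_size V E (level \<theta>))) has_integral Num) {g t..g s}"
    unfolding level_def cut_size_level_set[OF G] Num_def by (rule threshold_pairs_has_integral[OF fin range])
  ultimately have "ratio S0 * Den \<le> Num"
    using pointwise by (rule has_integral_le)
  moreover have S0': "S0 \<subseteq> V" "s \<in> S0" "t \<in> V - S0"
    using S0 st unfolding F_def by auto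
  ultimately have "real (cut_size V E S0) * Den \<le> Num * real (card S0 * card (V - S0))"
    using card_mult_card_diff_pos[OF fin S0'] unfolding ratio_def pairs_def by (simp add: field_simps)
  with S0' show ?thesis
    using Theta_mult_le[OF fin S0'] unfolding Num_def Den_def by (intro exI[of _ S0]) simp
qed

lemma sum_edges_le_dmax:
  assumes "simple_graph V E" "\<And>u. u \<in> V \<Longrightarrow> 0 \<le> f u"
  shows "(\<Sum>u\<in>V. \<Sum>v\<in>V. if E u v then f u else 0) \<le> dmax V E * (\<Sum>u\<in>V. f u)"
proof -
  have fin: "finite V"
    using assms(1) unfolding simple_graph_def by auto
  have "(\<Sum>v\<in>V. if E u v then f u else 0) = real (degree V E u) * f u" for u
    unfolding degree_def using sum.inter_filter[OF fin, of "\<lambda>_. f u" "E u"] by simp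
  moreover have "real (degree V E u) \<le> dmax V E" if "u \<in> V" for u
    unfolding dmax_def using fin that by simp
  ultimately show ?thesis
    unfolding sum_distrib_left by (intro sum_mono) (simp add: mult_right_mono assms(2))
qed

lemma edge_signed_square_variation_sq_le:
  assumes G: "simple_graph V E"
  shows "(\<Sum>u\<in>V. \<Sum>v\<in>V. if E u v then \<bar>a u * \<bar>a u\<bar> - a v * \<bar>a v\<bar>\<bar> else 0)\<^sup>2
    \<le> 4 * dmax V E * (\<Sum>v\<in>V. (a v)\<^sup>2) * dirichlet V E a a"
proof -
  have sym: "E u v = E v u" for u v
    using G unfolding simple_graph_def by blast
  define p where "p u v = (if E u v then \<bar>a u - a v\<bar> else 0)" for u v
  define q where "q u v = (if E u v then \<bar>a u\<bar> + \<bar>a v\<bar> else 0)" for u v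
  have p_sq: "(\<Sum>u\<in>V. \<Sum>v\<in>V. (p u v)\<^sup>2) = dirichlet V E a a"
    unfolding dirichlet_def p_def by (intro sum.cong refl) (simp add: power2_eq_square)
  have q_bound: "(\<Sum>u\<in>V. \<Sum>v\<in>V. (q u v)\<^sup>2) \<le> 4 * dmax V E * (\<Sum>v\<in>V. (a v)\<^sup>2)"
  proof -
    let ?A = "\<Sum>u\<in>V. \<Sum>v\<in>V. if E u v then (a u)\<^sup>2 else 0"
    have "(q u v)\<^sup>2 \<le> 2 * (if E u v then (a u)\<^sup>2 else 0) + 2 * (if E u v then (a v)\<^sup>2 else 0)" for u v
      using zero_le_square[of "\<bar>a u\<bar> - \<bar>a v\<bar>"] unfolding q_def by (simp add: power2_eq_square algebra_simps)
    then have "(\<Sum>u\<in>V. \<Sum>v\<in>V. (q u v)\<^sup>2)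
        \<le> 2 * ?A + 2 * (\<Sum>u\<in>V. \<Sum>v\<in>V. if E u v then (a v)\<^sup>2 else 0)"
      unfolding sum_distrib_left sum.distrib[symmetric] by (intro sum_mono)
    also have "(\<Sum>u\<in>V. \<Sum>v\<in>V. if E u v then (a v)\<^sup>2 else 0) = ?A"
      by (subst sum.swap) (simp add: sym)
    also have "2 * ?A + 2 * ?A \<le> 4 * dmax V E * (\<Sum>v\<in>V. (a v)\<^sup>2)"
      using sum_edges_le_dmax[OF G, of "\<lambda>u. (a u)\<^sup>2"] by simp
    finally show ?thesis .
  qed
  have "(\<Sum>u\<in>V. \<Sum>v\<in>V. if E u v then \<bar>a u * \<bar>a u\<bar> - a v * \<bar>a v\<bar>\<bar> else 0)\<^sup>2
      \<le> (\<Sum>u\<in>V. \<Sum>v\<in>V. p u v * q u v)\<^sup>2"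
    unfolding p_def q_def by (intro power_mono sum_mono sum_nonneg) (auto simp: abs_signed_square_diff_le)
  also have "\<dots> \<le> (\<Sum>u\<in>V. \<Sum>v\<in>V. (p u v)\<^sup>2) * (\<Sum>u\<in>V. \<Sum>v\<in>V. (q u v)\<^sup>2)"
    using Cauchy_Schwarz_ineq_sum[of "\<lambda>x. p (fst x) (snd x)" "\<lambda>x. q (fst x) (snd x)" "V \<times> V"]
    by (simp add: sum.cartesian_product case_prod_beta)
  also have "\<dots> \<le> dirichlet V E a a * (4 * dmax V E * (\<Sum>v\<in>V. (a v)\<^sup>2))"
    unfolding p_sq using q_bound dirichlet_nonneg by (rule mult_left_mono)
  finally show ?thesis
    by (simp add: mult_ac)
qed

lemma pairs_signed_square_variation_ge:
  assumes "finite V" "(\<Sum>v\<in>V. a v) = 0"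
  shows "real (card V) * (\<Sum>v\<in>V. (a v)\<^sup>2)
    \<le> 2 * (\<Sum>u\<in>V. \<Sum>v\<in>V. max 0 (a u * \<bar>a u\<bar> - a v * \<bar>a v\<bar>))"
proof -
  let ?g = "\<lambda>v. a v * \<bar>a v\<bar>"
  have abs_split: "\<bar>z\<bar> = max 0 z + max 0 (- z)" for z :: real
    by auto
  have "(\<Sum>u\<in>V. \<Sum>v\<in>V. (a u - a v)\<^sup>2 / 2)
      = (\<Sum>u\<in>V. \<Sum>v\<in>V. (a u)\<^sup>2 / 2 - a u * a v + (a v)\<^sup>2 / 2)"
    by (intro sum.cong refl) (simp add: power2_diff field_simps)
  also have "\<dots> = real (card V) * (\<Sum>v\<in>V. (a v)\<^sup>2)"
    using assms(2) by (simp add: sum.distrib sum_subtractf flip: sum_product sum_distrib_left sum_divide_distrib)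
  finally have "real (card V) * (\<Sum>v\<in>V. (a v)\<^sup>2) = (\<Sum>u\<in>V. \<Sum>v\<in>V. (a u - a v)\<^sup>2 / 2)" ..
  also have "\<dots> \<le> (\<Sum>u\<in>V. \<Sum>v\<in>V. \<bar>?g u - ?g v\<bar>)"
    using square_diff_le_signed_square_diff by (intro sum_mono) (simp add: field_simps)
  also have "\<dots> = (\<Sum>u\<in>V. \<Sum>v\<in>V. max 0 (?g u - ?g v)) + (\<Sum>u\<in>V. \<Sum>v\<in>V. max 0 (?g v - ?g u))"
    unfolding sum.distrib[symmetric] using abs_split by (intro sum.cong refl) (metis minus_diff_eq)
  also have "(\<Sum>u\<in>V. \<Sum>v\<in>V. max 0 (?g v - ?g u)) = (\<Sum>u\<in>V. \<Sum>v\<in>V. max 0 (?g u - ?g v))"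
    by (rule sum.swap)
  finally show ?thesis
    by simp
qed


lemma ex_cut_Theta_sq_le_dirichlet:
  fixes a :: "nat \<Rightarrow> real"
  assumes G: "simple_graph V E" and st: "s \<in> V" "t \<in> V" "s \<noteq> t"
    and range: "\<forall>v\<in>V. a t \<le> a v \<and> a v \<le> a s" and centered: "(\<Sum>v\<in>V. a v) = 0"
  shows "\<exists>S\<subseteq>V. s \<in> S \<and> t \<in> V - S \<and>
    (Theta V E S)\<^sup>2 * (\<Sum>v\<in>V. (a v)\<^sup>2) \<le> 16 * dmax V E * dirichlet V E a a"
proof -
  define g where "g v = a v * \<bar>a v\<bar>" for v
  define Num where "Num = (\<Sum>u\<in>V. \<Sum>v\<in>V. if E u v then max 0 (g u - g v) else 0)"
  define Den where "Den = (\<Sum>u\<in>V. \<Sum>v\<in>V. max 0 (g u - g v))"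
  define Z where "Z = (\<Sum>v\<in>V. (a v)\<^sup>2)"
  define n where "n = real (card V)"
  have "n > 0"
    using G st unfolding n_def simple_graph_def by (auto simp: card_gt_0_iff)
  have "\<forall>v\<in>V. g t \<le> g v \<and> g v \<le> g s"
    using range unfolding g_def by (auto intro: signed_square_mono)
  then obtain S where S: "S \<subseteq> V" "s \<in> S" "t \<in> V - S" and cut: "Theta V E S * Den \<le> n * Num"
    using ex_cut_Theta_le[OF G st] unfolding Num_def Den_def n_def by blast
  have "0 \<le> Num"
    unfolding Num_def by (intro sum_nonneg) auto
  moreover have "Num \<le> (\<Sum>u\<in>V. \<Sum>v\<in>V. if E u v then \<bar>g u - g v\<bar> else 0)"
    unfolding Num_def by (intro sum_mono) auto
  ultimately have "Num\<^sup>2 \<le> 4 * dmax V E * Z * dirichlet V E a a"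
    using edge_signed_square_variation_sq_le[OF G, of a] unfolding g_def Z_def
    by (meson order_trans power_mono)
  have "0 \<le> Theta V E S" "0 \<le> Z"
    unfolding Theta_def Z_def by (simp_all add: sum_nonneg)
  have "n * Z \<le> 2 * Den"
    using pairs_signed_square_variation_ge[OF _ centered] G
    unfolding n_def Z_def Den_def g_def simple_graph_def by blast
  then have "Theta V E S * (n * Z) \<le> Theta V E S * (2 * Den)"
    using \<open>0 \<le> Theta V E S\<close> by (rule mult_left_mono)
  with cut have "n * (Theta V E S * Z) \<le> n * (2 * Num)"
    by (simp add: algebra_simps)
  then have "Theta V E S * Z \<le> 2 * Num"
    using \<open>n > 0\<close> by simp
  then have "(Theta V E S * Z)\<^sup>2 \<le> (2 * Num)\<^sup>2"
    using \<open>0 \<le> Theta V E S\<close> \<open>0 \<le> Z\<close> by (intro power_mono) auto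
  also have "\<dots> \<le> Z * (16 * dmax V E * dirichlet V E a a)"
    using \<open>Num\<^sup>2 \<le> 4 * dmax V E * Z * dirichlet V E a a\<close> by (simp add: power_mult_distrib mult_ac)
  finally have "Z * ((Theta V E S)\<^sup>2 * Z) \<le> Z * (16 * dmax V E * dirichlet V E a a)"
    by (simp add: power2_eq_square mult_ac)
  moreover have "0 \<le> 16 * dmax V E * dirichlet V E a a"
    unfolding dmax_def by (simp add: dirichlet_nonneg)
  ultimately have "(Theta V E S)\<^sup>2 * Z \<le> 16 * dmax V E * dirichlet V E a a"
    using \<open>0 \<le> Z\<close> by (cases "Z = 0") auto
  with S show ?thesis
    unfolding Z_def by blast
qed

lemma ex_cut_Theta_sq_le_potential:
  assumes G: "simple_graph V E" and st: "s \<in> V" "t \<in> V" "s \<noteq> t" and conn: "E\<^sup>*\<^sup>* s t"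
  defines "\<phi> \<equiv> potential V E s t"
  shows "\<exists>S\<subseteq>V. s \<in> S \<and> t \<in> V - S \<and>
    (Theta V E S)\<^sup>2 * (\<Sum>i\<in>V. (\<phi> i)\<^sup>2) \<le> 32 * dmax V E * (\<phi> s - \<phi> t)"
proof -
  have fin: "finite V"
    using G unfolding simple_graph_def by auto
  have flow: "mvmult V (laplacian V E) \<phi> = ind_diff s t"
    unfolding \<phi>_def using laplacian_potential[OF G st conn] .
  have orth: "\<And>k. mvmult V (laplacian V E) k = 0 \<Longrightarrow> (\<Sum>i\<in>V. \<phi> i * k i) = 0"
    unfolding \<phi>_def by (rule potential_orthogonal[OF G])
  have energy: "dirichlet V E \<phi> \<phi> = 2 * (\<phi> s - \<phi> t)"
    by (rule dirichlet_potential[OF G st flow])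
  then have "\<phi> t \<le> \<phi> s"
    using dirichlet_nonneg[of V E \<phi>] by simp
  define \<psi> where "\<psi> v = max (\<phi> t) (min (\<phi> s) (\<phi> v))" for v
  define a where "a v = \<psi> v - (\<Sum>j\<in>V. \<psi> j) / card V" for v
  have "(\<Sum>i\<in>V. (\<phi> i)\<^sup>2) \<le> (\<Sum>i\<in>V. (a i)\<^sup>2)"
    unfolding a_def \<psi>_def by (rule sum_sq_le_centered_clamp[OF G st flow orth \<open>\<phi> t \<le> \<phi> s\<close>])
  have sum_sq_le: "(Theta V E S)\<^sup>2 * (\<Sum>i\<in>V. (\<phi> i)\<^sup>2) \<le> (Theta V E S)\<^sup>2 * (\<Sum>i\<in>V. (a i)\<^sup>2)" for S
    using \<open>(\<Sum>i\<in>V. (\<phi> i)\<^sup>2) \<le> (\<Sum>i\<in>V. (a i)\<^sup>2)\<close> by (rule mult_left_mono) simp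
  have "dirichlet V E a a = dirichlet V E \<psi> \<psi>"
    unfolding a_def dirichlet_def by (intro sum.cong refl) (simp add: algebra_simps)
  also have "\<dots> \<le> dirichlet V E \<phi> \<phi>"
    unfolding \<psi>_def by (rule dirichlet_clamp_le)
  finally have "16 * dmax V E * dirichlet V E a a \<le> 16 * dmax V E * (2 * (\<phi> s - \<phi> t))"
    unfolding energy by (rule mult_left_mono) (simp add: dmax_def)
  then have energy_a: "16 * dmax V E * dirichlet V E a a \<le> 32 * dmax V E * (\<phi> s - \<phi> t)"
    by (simp add: algebra_simps)
  have range_a: "\<forall>v\<in>V. a t \<le> a v \<and> a v \<le> a s"
    using \<open>\<phi> t \<le> \<phi> s\<close> unfolding a_def \<psi>_def by auto
  have centered_a: "(\<Sum>v\<in>V. a v) = 0"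
    using fin st unfolding a_def by (simp add: sum_subtractf card_gt_0_iff)
  obtain S where S: "S \<subseteq> V" "s \<in> S" "t \<in> V - S"
    and cheeger: "(Theta V E S)\<^sup>2 * (\<Sum>v\<in>V. (a v)\<^sup>2) \<le> 16 * dmax V E * dirichlet V E a a"
    using ex_cut_Theta_sq_le_dirichlet[OF G st range_a centered_a] by blast
  from S order_trans[OF order_trans[OF sum_sq_le cheeger] energy_a] show ?thesis
    by (intro exI[of _ S]) simp
qed

lemma Theta_reachable_eq_0: "Theta V E {v \<in> V. E\<^sup>*\<^sup>* s v} = 0"
proof -
  have "{(u, v). u \<in> {v \<in> V. E\<^sup>*\<^sup>* s v} \<and> v \<in> V - {v \<in> V. E\<^sup>*\<^sup>* s v} \<and> E u v} = {}"
    by (auto intro: rtranclp.rtrancl_into_rtrancl)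
  then have "cut_size V E {v \<in> V. E\<^sup>*\<^sup>* s v} = 0"
    unfolding cut_size_def by (simp only: card.empty)
  then show ?thesis
    unfolding Theta_def by simp
qed

lemma divide_le_inverse_square_if:
  fixes \<theta> b r c :: real
  assumes "\<theta>\<^sup>2 * b \<le> c * r" "0 \<le> b" "0 \<le> c"
  shows "\<theta> = 0 \<or> b / r \<le> c * inverse (\<theta>\<^sup>2)"
proof (cases "\<theta> = 0")
  case False
  then have "0 < \<theta>\<^sup>2"
    by simp
  show ?thesis
  proof (cases "0 < r")
    case True
    from assms(1) have "b \<le> c * r / \<theta>\<^sup>2"
      using \<open>0 < \<theta>\<^sup>2\<close> by (simp add: pos_le_divide_eq mult.commute)
    then have "b / r \<le> c / \<theta>\<^sup>2"
      using True by (simp add: pos_divide_le_eq times_divide_eq_left)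
    then show ?thesis
      by (simp add: divide_inverse)
  next
    case False
    then have "b / r \<le> 0"
      using assms(2) by (simp add: divide_nonneg_nonpos)
    also have "0 \<le> c * inverse (\<theta>\<^sup>2)"
      using assms(3) by simp
    finally show ?thesis ..
  qed
qed simp

lemma ex_cut_biharm_sq_div_eff_res_le:
  assumes G: "simple_graph V E" and st: "s \<in> V" "t \<in> V" "s \<noteq> t"
  shows "\<exists>S\<subseteq>V. s \<in> S \<and> t \<in> V - S \<and> (Theta V E S = 0 \<or>
    (biharm V E s t)\<^sup>2 / eff_res V E s t \<le> 32 * dmax V E * inverse ((Theta V E S)\<^sup>2))"
proof (cases "E\<^sup>*\<^sup>* s t")
  case True
  then obtain S where S: "S \<subseteq> V" "s \<in> S" "t \<in> V - S" and
    "(Theta V E S)\<^sup>2 * (\<Sum>i\<in>V. (potential V E s t i)\<^sup>2)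
      \<le> 32 * dmax V E * (potential V E s t s - potential V E s t t)"
    using ex_cut_Theta_sq_le_potential[OF G st] by blast
  moreover have "eff_res V E s t = potential V E s t s - potential V E s t t"
    using G st by (simp add: eff_res_potential simple_graph_def)
  ultimately have "(Theta V E S)\<^sup>2 * (biharm V E s t)\<^sup>2 \<le> 32 * dmax V E * eff_res V E s t"
    by (simp only: biharm_potential[OF G])
  then have "Theta V E S = 0 \<or>
      (biharm V E s t)\<^sup>2 / eff_res V E s t \<le> 32 * dmax V E * inverse ((Theta V E S)\<^sup>2)"
    by (rule divide_le_inverse_square_if) (simp_all add: dmax_def)
  with S show ?thesis
    by (intro exI[of _ S]) simp
next
  case False
  with st show ?thesis
    using Theta_reachable_eq_0[of V E s] by (intro exI[of _ "{v \<in> V. E\<^sup>*\<^sup>* s v}"]) auto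
qed

theorem theoremE3:
  "\<exists>C > 0. \<forall>V E s t. simple_graph V E \<and> s \<in> V \<and> t \<in> V \<and> s \<noteq> t \<longrightarrow>
     (\<exists>S \<subseteq> V. s \<in> S \<and> t \<in> V - S \<and>
        (Theta V E S = 0 \<or>
         (biharm V E s t)\<^sup>2 / eff_res V E s t \<le> C * dmax V E * inverse ((Theta V E S)\<^sup>2)))"
  by (intro exI[of _ "32::real"] conjI allI impI, simp, elim conjE)
    (rule ex_cut_biharm_sq_div_eff_res_le)

end
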